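(* Let $\beta>0$, $g\in\mathcal G$, and $F(x)=(1-x)^\beta g(x)$ for $x\in[0,1)$. Then \[ \lim_{t\to\infty}t\int_0^1F(s)\big[F(s)-F((1-1/t)s)\big]\,ds=-\frac12\int_0^1F(s)^2\,ds. \]
   Context: $\mathcal G$ denotes the set of functions $g:[0,1)\to\mathbb{R}$ of the form $g(x)=G(1/(1-x))$, where $G:(0,\infty)\to\mathbb{R}$ is continuously differentiable and, for every $\varepsilon>0$, $|G(x)|=o(x^\varepsilon)$ and $|xG'(x)|=o(x^\varepsilon)$ as $x\to\infty$ (i.e. they grow slower than any power function). *)

theory Defs
  imports "HOL-Analysis.Analysis" "HOL-Library.Landau_Symbols"
begin

definition classG :: "(real \<Rightarrow> real) set" where
  "classG = {g. \<exists>G :: real \<Rightarrow> real.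
      G C1_differentiable_on {0<..} \<and>
      (\<forall>\<epsilon>>0. G \<in> o[at_top](\<lambda>x. x powr \<epsilon>)) \<and>
      (\<forall>\<epsilon>>0. (\<lambda>x. x * deriv G x) \<in> o[at_top](\<lambda>x. x powr \<epsilon>)) \<and>
      (\<forall>x\<in>{0..<1}. g x = G (1 / (1 - x)))}"

end

theory Submission
  imports Defs
begin

(* The integrand is F s * t (F s - F ((1 - 1/t) s)), and t (F s - F ((1 - 1/t) s)) tends to s F'(s).
   Because G and x G'(x) grow slower than any power, |F s| <= C (1-s)^(\<beta>-\<epsilon>) and
   |F' s| <= C (1-s)^(\<beta>-1-\<epsilon>); with the mean value theorem this dominates the integrand by
   C^2 (1 + (1-s)^(2\<beta>-1-2\<epsilon>)), which is integrable for small \<epsilon>. By dominated convergence the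
   limit is the integral of F s * s F'(s), and integrating by parts against s F(s)^2/2, which vanishes
   at both endpoints, turns this into -1/2 times the integral of F^2. *)

lemma smallo_powr_imp_bound:
  fixes f :: "real \<Rightarrow> real"
  assumes cont: "continuous_on {1..} f" and small: "f \<in> o[at_top](\<lambda>x. x powr \<epsilon>)"
    and "\<epsilon> \<ge> 0"
  shows "\<exists>C>0. \<forall>x\<ge>1. \<bar>f x\<bar> \<le> C * x powr \<epsilon>"
proof -
  have "eventually (\<lambda>x. norm (f x) \<le> 1 * norm (x powr \<epsilon>)) at_top"
    using landau_o.smallD[OF small, of 1] by simp
  then obtain X where X: "\<And>x. x \<ge> X \<Longrightarrow> \<bar>f x\<bar> \<le> x powr \<epsilon>"
    by (auto simp: eventually_at_top_linorder)
  have "compact (f ` {1..max 1 X})"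
    by (rule compact_continuous_image) (auto intro: continuous_on_subset[OF cont])
  then obtain B where B: "\<And>x. x \<in> {1..max 1 X} \<Longrightarrow> \<bar>f x\<bar> \<le> B"
    by (fastforce dest!: compact_imp_bounded simp: bounded_iff)
  have "\<bar>f x\<bar> \<le> max B 1 * x powr \<epsilon>" if x: "x \<ge> 1" for x
  proof -
    have "1 \<le> x powr \<epsilon>" using x \<open>\<epsilon> \<ge> 0\<close> by (simp add: ge_one_powr_ge_zero)
    then have "max B 1 \<le> max B 1 * x powr \<epsilon>" "x powr \<epsilon> \<le> max B 1 * x powr \<epsilon>"
      by (simp_all add: mult_le_cancel_left1 mult_le_cancel_right1)
    moreover have "\<bar>f x\<bar> \<le> B" if "x \<le> max 1 X" using B x that by simp
    moreover have "\<bar>f x\<bar> \<le> x powr \<epsilon>" if "\<not> x \<le> max 1 X" using X that by simp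
    ultimately show ?thesis by (smt (verit) max.cobounded1)
  qed
  then show ?thesis by (intro exI[of _ "max B 1"]) auto
qed

lemma C1_differentiable_on_open_real:
  fixes G :: "real \<Rightarrow> real"
  assumes "G C1_differentiable_on S" "open S"
  shows "\<And>x. x \<in> S \<Longrightarrow> (G has_real_derivative deriv G x) (at x)"
    and "continuous_on S (deriv G)" and "continuous_on S G"
proof -
  have diff: "\<forall>x\<in>S. G differentiable at x"
    and cont: "continuous_on S (\<lambda>x. vector_derivative G (at x))"
    using assms(1) unfolding C1_differentiable_on_eq by auto
  show der: "\<And>x. x \<in> S \<Longrightarrow> (G has_real_derivative deriv G x) (at x)"
    using diff DERIV_deriv_iff_real_differentiable by blast
  have "\<And>x. x \<in> S \<Longrightarrow> vector_derivative G (at x) = deriv G x"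
    using der by (auto intro!: vector_derivative_at simp: has_real_derivative_iff_has_vector_derivative)
  then show "continuous_on S (deriv G)"
    using cont by (simp cong: continuous_on_cong)
  show "continuous_on S G"
    using diff by (meson differentiable_at_imp_differentiable_on differentiable_imp_continuous_on)
qed

lemma integrable_on_one_minus_powr:
  fixes e :: real
  assumes "e > -1"
  shows "(\<lambda>s. (1 - s) powr e) integrable_on {0..1}"
proof -
  let ?P = "\<lambda>s::real. - ((1 - s) powr (e + 1)) / (e + 1)"
  have "((\<lambda>s. (1 - s) powr e) has_integral ?P 1 - ?P 0) {0..1}"
  proof (rule fundamental_theorem_of_calculus_interior)
    show "continuous_on {0..1} ?P"
      using assms by (intro continuous_intros continuous_on_powr') auto
    fix x :: real assume "x \<in> {0<..<1}"
    then have "(?P has_real_derivative (1 - x) powr e) (at x)"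
      using assms by (auto intro!: derivative_eq_intros)
    then show "(?P has_vector_derivative (1 - x) powr e) (at x)"
      by (simp add: has_real_derivative_iff_has_vector_derivative)
  qed simp
  then show ?thesis by blast
qed

lemma powr_le_one_plus_powr:
  fixes x y e :: real
  assumes "0 < y" "y \<le> x" "x \<le> 1"
  shows "x powr e \<le> 1 + y powr e"
proof (cases "e \<ge> 0")
  case True
  then have "x powr e \<le> 1" using assms by (intro powr_le1) auto
  then show ?thesis by (simp add: add_increasing2)
next
  case False
  then have "x powr e \<le> y powr e" using assms by (intro powr_mono2') auto
  then show ?thesis by simp
qed

lemma continuous_on_zero_one_if_decay:
  fixes F :: "real \<Rightarrow> real"
  assumes der: "\<And>s. 0 \<le> s \<Longrightarrow> s < 1 \<Longrightarrow> (F has_real_derivative F' s) (at s)"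
    and bound: "\<And>s. 0 \<le> s \<Longrightarrow> s < 1 \<Longrightarrow> \<bar>F s\<bar> \<le> C * (1 - s) powr a"
    and "F 1 = 0" "a > 0"
  shows "continuous_on {0..1} F"
  unfolding continuous_on_eq_continuous_within
proof
  fix x :: real assume x: "x \<in> {0..1}"
  show "continuous (at x within {0..1}) F"
  proof (cases "x < 1")
    case True
    then show ?thesis
      using x DERIV_isCont[OF der] continuous_at_imp_continuous_within by auto
  next
    case False
    then have "x = 1" using x by simp
    have "(F \<longlongrightarrow> 0) (at 1 within {0..1})"
    proof (rule Lim_null_comparison)
      show "eventually (\<lambda>s. norm (F s) \<le> C * \<bar>1 - s\<bar> powr a) (at 1 within {0..1})"
        unfolding eventually_at_filter by (rule always_eventually) (auto intro: bound)
      have "((\<lambda>s. C * \<bar>1 - s\<bar> powr a) \<longlongrightarrow> C * \<bar>1 - 1\<bar> powr a) (at 1 within {0..1})"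
        using \<open>a > 0\<close> by (intro tendsto_intros tendsto_powr') auto
      then show "((\<lambda>s. C * \<bar>1 - s\<bar> powr a) \<longlongrightarrow> 0) (at 1 within {0..1})" by simp
    qed
    then show ?thesis using \<open>x = 1\<close> \<open>F 1 = 0\<close> by (simp add: continuous_within)
  qed
qed

lemma tendsto_scaled_difference:
  fixes F :: "real \<Rightarrow> real"
  assumes "(F has_real_derivative F') (at s)"
  shows "((\<lambda>t. t * (F s - F ((1 - 1/t) * s))) \<longlongrightarrow> s * F') at_top"
proof (cases "s = 0")
  case False
  have quotient: "((\<lambda>y. (F y - F s) / (y - s)) \<longlongrightarrow> F') (at s)"
    using assms by (simp add: has_field_derivative_iff)
  have "((\<lambda>t. 1/t :: real) \<longlongrightarrow> 0) at_top"
    using tendsto_inverse_0_at_top[OF filterlim_ident] by (simp add: inverse_eq_divide)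
  then have "((\<lambda>t. (1 - 1/t) * s) \<longlongrightarrow> (1 - 0) * s) at_top"
    by (intro tendsto_intros)
  moreover have "eventually (\<lambda>t. (1 - 1/t) * s \<noteq> s) at_top"
    using eventually_gt_at_top[of 0] by eventually_elim (use False in auto)
  ultimately have "filterlim (\<lambda>t. (1 - 1/t) * s) (at s) at_top"
    by (simp add: filterlim_at)
  then have "((\<lambda>t. s * ((F ((1 - 1/t) * s) - F s) / ((1 - 1/t) * s - s))) \<longlongrightarrow> s * F') at_top"
    by (intro tendsto_intros filterlim_compose[OF quotient])
  then show ?thesis
  proof (rule Lim_transform_eventually)
    show "eventually (\<lambda>t. s * ((F ((1 - 1/t) * s) - F s) / ((1 - 1/t) * s - s))
        = t * (F s - F ((1 - 1/t) * s))) at_top"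
      using eventually_gt_at_top[of 0] by eventually_elim (use False in \<open>auto simp: field_simps\<close>)
  qed
qed simp

lemma scaled_difference_bound:
  fixes F F' :: "real \<Rightarrow> real"
  assumes der: "\<And>s. 0 \<le> s \<Longrightarrow> s < 1 \<Longrightarrow> (F has_real_derivative F' s) (at s)"
    and F_bound: "\<And>s. 0 \<le> s \<Longrightarrow> s < 1 \<Longrightarrow> \<bar>F s\<bar> \<le> C * (1 - s) powr a"
    and F'_bound: "\<And>s. 0 \<le> s \<Longrightarrow> s < 1 \<Longrightarrow> \<bar>F' s\<bar> \<le> C * (1 - s) powr b"
    and "F 1 = 0" "a \<ge> 0" "t \<ge> 1" "0 \<le> s" "s \<le> 1"
  shows "\<bar>F s * (t * (F s - F ((1 - 1/t) * s)))\<bar> \<le> C\<^sup>2 * (1 + (1 - s) powr (a + b))"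
proof -
  consider "s = 0" | "s = 1" | "0 < s" "s < 1" using \<open>0 \<le> s\<close> \<open>s \<le> 1\<close> by linarith
  then show ?thesis
  proof cases
    case 3
    have "0 \<le> C * (1 - s) powr a" using F_bound[of s] 3 by linarith
    then have "C \<ge> 0" using 3 by (simp add: zero_le_mult_iff)
    define r where "r = (1 - 1/t) * s"
    have "0 \<le> r" "r < s" using 3 \<open>t \<ge> 1\<close> by (auto simp: r_def field_simps)
    moreover have "\<And>x. r \<le> x \<Longrightarrow> x \<le> s \<Longrightarrow> (F has_real_derivative F' x) (at x)"
      using der \<open>0 \<le> r\<close> 3 by simp
    ultimately obtain z where z: "r < z" "z < s" and mvt: "F s - F r = (s - r) * F' z"
      using MVT2 by blast
    have "t * (F s - F r) = s * F' z" using mvt \<open>t \<ge> 1\<close> by (simp add: r_def field_simps)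
    then have "\<bar>F s * (t * (F s - F r))\<bar> \<le> \<bar>F s\<bar> * \<bar>F' z\<bar>"
      using 3 by (simp add: abs_mult mult_left_le_one_le mult_left_mono)
    also have "\<dots> \<le> (C * (1 - s) powr a) * (C * (1 + (1 - s) powr b))"
    proof (rule mult_mono)
      have "(1 - z) powr b \<le> 1 + (1 - s) powr b"
        using z \<open>0 \<le> r\<close> 3 by (intro powr_le_one_plus_powr) auto
      then show "\<bar>F' z\<bar> \<le> C * (1 + (1 - s) powr b)"
        using F'_bound[of z] z \<open>0 \<le> r\<close> 3 mult_left_mono[OF _ \<open>C \<ge> 0\<close>] by fastforce
    qed (use F_bound 3 \<open>C \<ge> 0\<close> in auto)
    also have "\<dots> = C\<^sup>2 * ((1 - s) powr a + (1 - s) powr (a + b))"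
      by (simp add: powr_add power2_eq_square algebra_simps)
    also have "\<dots> \<le> C\<^sup>2 * (1 + (1 - s) powr (a + b))"
      using 3 \<open>a \<ge> 0\<close> by (intro mult_left_mono add_right_mono powr_le1) auto
    finally show ?thesis by (simp add: r_def)
  qed (simp_all add: \<open>F 1 = 0\<close>)
qed

lemma has_integral_mult_scaled_derivative:
  fixes F F' :: "real \<Rightarrow> real"
  assumes cont: "continuous_on {0..1} F"
    and der: "\<And>s. 0 < s \<Longrightarrow> s < 1 \<Longrightarrow> (F has_real_derivative F' s) (at s)"
    and "F 1 = 0"
  shows "((\<lambda>s. F s * (s * F' s)) has_integral - (1/2) * integral {0..1} (\<lambda>s. (F s)\<^sup>2)) {0..1}"
proof -
  let ?P = "\<lambda>s. s * (F s)\<^sup>2 / 2"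
  have "((\<lambda>s. (F s)\<^sup>2 / 2 + F s * (s * F' s)) has_integral ?P 1 - ?P 0) {0..1}"
  proof (rule fundamental_theorem_of_calculus_interior)
    show "continuous_on {0..1} ?P" using cont by (intro continuous_intros) auto
    fix x :: real assume "x \<in> {0<..<1}"
    then have "(?P has_real_derivative (F x)\<^sup>2 / 2 + F x * (x * F' x)) (at x)"
      by (auto intro!: derivative_eq_intros der simp: algebra_simps power2_eq_square)
    then show "(?P has_vector_derivative (F x)\<^sup>2 / 2 + F x * (x * F' x)) (at x)"
      by (simp add: has_real_derivative_iff_has_vector_derivative)
  qed simp
  then have "((\<lambda>s. (F s)\<^sup>2 / 2 + F s * (s * F' s)) has_integral 0) {0..1}"
    using \<open>F 1 = 0\<close> by simp
  moreover have "(\<lambda>s. (F s)\<^sup>2) integrable_on {0..1}"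
    using cont by (intro integrable_continuous_interval continuous_intros)
  ultimately have "((\<lambda>s. ((F s)\<^sup>2 / 2 + F s * (s * F' s)) - (F s)\<^sup>2 / 2)
      has_integral 0 - integral {0..1} (\<lambda>s. (F s)\<^sup>2) / 2) {0..1}"
    by (intro has_integral_diff has_integral_divide integrable_integral)
  then show ?thesis by simp
qed

lemma tendsto_scaled_difference_integral:
  fixes F F' :: "real \<Rightarrow> real"
  assumes der: "\<And>s. 0 \<le> s \<Longrightarrow> s < 1 \<Longrightarrow> (F has_real_derivative F' s) (at s)"
    and F_bound: "\<And>s. 0 \<le> s \<Longrightarrow> s < 1 \<Longrightarrow> \<bar>F s\<bar> \<le> C * (1 - s) powr a"
    and F'_bound: "\<And>s. 0 \<le> s \<Longrightarrow> s < 1 \<Longrightarrow> \<bar>F' s\<bar> \<le> C * (1 - s) powr b"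
    and "F 1 = 0" "a > 0" "a + b > -1"
  shows "((\<lambda>t. t * integral {0..1} (\<lambda>s. F s * (F s - F ((1 - 1/t) * s))))
           \<longlongrightarrow> - (1/2) * integral {0..1} (\<lambda>s. (F s)\<^sup>2)) at_top"
proof -
  define f where "f t s = F s * (t * (F s - F ((1 - 1/t) * s)))" for t s
  define h where "h s = C\<^sup>2 * (1 + (1 - s) powr (a + b))" for s
  have cont: "continuous_on {0..1} F"
    using continuous_on_zero_one_if_decay[OF der F_bound \<open>F 1 = 0\<close> \<open>a > 0\<close>] .
  have f_integrable: "f t integrable_on {0..1}" if "t \<ge> 1" for t
  proof -
    have "(\<lambda>s. (1 - 1/t) * s) ` {0..1} \<subseteq> {0..1}"
      using that by (auto intro!: mult_le_one)
    then have "continuous_on {0..1} (\<lambda>s. F ((1 - 1/t) * s))"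
      by (intro continuous_on_compose2[OF cont]) (auto intro: continuous_intros)
    then show ?thesis
      unfolding f_def using cont by (intro integrable_continuous_interval continuous_intros)
  qed
  have h_integrable: "h integrable_on {0..1}"
    unfolding h_def using \<open>a + b > -1\<close>
    by (intro integrable_on_mult_right integrable_add integrable_on_one_minus_powr) auto
  have "((\<lambda>t. integral {0..1} (f (max t 1))) \<longlongrightarrow> integral {0..1} (\<lambda>s. F s * (s * F' s))) at_top"
  proof (rule tendsto_at_topI_sequentially)
    fix X :: "nat \<Rightarrow> real" assume "filterlim X at_top sequentially"
    then have X: "filterlim (\<lambda>k. max (X k) 1) at_top sequentially"
      by (rule filterlim_at_top_mono) auto
    show "(\<lambda>k. integral {0..1} (f (max (X k) 1))) \<longlonglongrightarrow> integral {0..1} (\<lambda>s. F s * (s * F' s))"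
    proof (rule dominated_convergence(2)[OF _ h_integrable])
      show "f (max (X k) 1) integrable_on {0..1}" for k by (rule f_integrable) simp
      fix s :: real assume s: "s \<in> {0..1}"
      show "norm (f (max (X k) 1) s) \<le> h s" for k
        using scaled_difference_bound[OF der F_bound F'_bound \<open>F 1 = 0\<close>] s \<open>a > 0\<close>
        by (simp add: f_def h_def)
      have "(F has_real_derivative F' s) (at s)" if "s < 1" using der s that by simp
      then have "((\<lambda>t. f t s) \<longlongrightarrow> F s * (s * F' s)) at_top"
        using s \<open>F 1 = 0\<close> unfolding f_def
        by (cases "s < 1") (auto intro: tendsto_mult_left tendsto_scaled_difference)
      then show "(\<lambda>k. f (max (X k) 1) s) \<longlonglongrightarrow> F s * (s * F' s)"
        by (rule filterlim_compose[OF _ X])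
    qed
  qed
  moreover have "integral {0..1} (\<lambda>s. F s * (s * F' s)) = - (1/2) * integral {0..1} (\<lambda>s. (F s)\<^sup>2)"
    using has_integral_mult_scaled_derivative[OF cont der \<open>F 1 = 0\<close>] by (simp add: integral_unique)
  moreover have "eventually (\<lambda>t. integral {0..1} (f (max t 1))
      = t * integral {0..1} (\<lambda>s. F s * (F s - F ((1 - 1/t) * s)))) at_top"
    using eventually_ge_at_top[of 1]
  proof eventually_elim
    case (elim t)
    have "f t = (\<lambda>s. t *\<^sub>R (F s * (F s - F ((1 - 1/t) * s))))"
      by (simp add: fun_eq_iff f_def)
    then show ?case using elim by simp
  qed
  ultimately show ?thesis by (simp add: tendsto_cong)
qed

lemma integral_scaled_difference_cong:
  fixes F F0 :: "real \<Rightarrow> real"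
  assumes "\<And>s. 0 \<le> s \<Longrightarrow> s < 1 \<Longrightarrow> F s = F0 s" "t \<ge> 1"
  shows "integral {0..1} (\<lambda>s. F s * (F s - F ((1 - 1/t) * s)))
       = integral {0..1} (\<lambda>s. F0 s * (F0 s - F0 ((1 - 1/t) * s)))"
proof (rule integral_spike[of "{1}"])
  fix s :: real assume "s \<in> {0..1} - {1}"
  then have s: "0 \<le> s" "s < 1" by auto
  moreover have "0 \<le> (1 - 1/t) * s" "(1 - 1/t) * s < 1"
    using s \<open>t \<ge> 1\<close> by (auto intro: le_less_trans[OF mult_left_le_one_le])
  ultimately show "F0 s * (F0 s - F0 ((1 - 1/t) * s)) = F s * (F s - F ((1 - 1/t) * s))"
    using assms(1) by simp
qed simp

lemma classG_bounds:
  assumes "g \<in> classG" "\<epsilon> > 0"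
  obtains C G where "C \<ge> 0"
    and "\<And>x. x > 0 \<Longrightarrow> (G has_real_derivative deriv G x) (at x)"
    and "\<And>x. x \<ge> 1 \<Longrightarrow> \<bar>G x\<bar> \<le> C * x powr \<epsilon>"
    and "\<And>x. x \<ge> 1 \<Longrightarrow> \<bar>x * deriv G x\<bar> \<le> C * x powr \<epsilon>"
    and "\<And>x. 0 \<le> x \<Longrightarrow> x < 1 \<Longrightarrow> g x = G (1 / (1 - x))"
proof -
  from assms(1) obtain G where G_C1: "G C1_differentiable_on {0<..}"
    and G_small: "G \<in> o[at_top](\<lambda>x. x powr \<epsilon>)"
    and G'_small: "(\<lambda>x. x * deriv G x) \<in> o[at_top](\<lambda>x. x powr \<epsilon>)"
    and g: "\<And>x. 0 \<le> x \<Longrightarrow> x < 1 \<Longrightarrow> g x = G (1 / (1 - x))"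
    unfolding classG_def using \<open>\<epsilon> > 0\<close> by auto
  note G = C1_differentiable_on_open_real[OF G_C1 open_greaterThan]
  have "continuous_on {1..} G" "continuous_on {1..} (\<lambda>x. x * deriv G x)"
    using G(2,3) by (auto intro!: continuous_intros elim: continuous_on_subset)
  then obtain C1 C2 where "C1 > 0" "C2 > 0"
    and C1: "\<And>x. x \<ge> 1 \<Longrightarrow> \<bar>G x\<bar> \<le> C1 * x powr \<epsilon>"
    and C2: "\<And>x. x \<ge> 1 \<Longrightarrow> \<bar>x * deriv G x\<bar> \<le> C2 * x powr \<epsilon>"
    using smallo_powr_imp_bound[OF _ G_small] smallo_powr_imp_bound[OF _ G'_small] \<open>\<epsilon> > 0\<close>
    by (meson less_imp_le)
  have "0 \<le> C1 * x powr \<epsilon>" "0 \<le> C2 * x powr \<epsilon>" for x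
    using \<open>C1 > 0\<close> \<open>C2 > 0\<close> by simp_all
  then have "\<bar>G x\<bar> \<le> (C1 + C2) * x powr \<epsilon>" "\<bar>x * deriv G x\<bar> \<le> (C1 + C2) * x powr \<epsilon>"
    if "x \<ge> 1" for x
    using C1[OF that] C2[OF that] by (simp_all add: distrib_right add_increasing2 add_increasing)
  with \<open>C1 > 0\<close> \<open>C2 > 0\<close> G(1) g show ?thesis by (intro that[of "C1 + C2"]) auto
qed

lemma has_real_derivative_weighted_composition:
  fixes G G' :: "real \<Rightarrow> real"
  assumes "s < 1" and "(G has_real_derivative G' (1 / (1 - s))) (at (1 / (1 - s)))"
  shows "((\<lambda>s. (1 - s) powr \<beta> * G (1 / (1 - s))) has_real_derivative
           (1 - s) powr (\<beta> - 1) * (1 / (1 - s) * G' (1 / (1 - s)) - \<beta> * G (1 / (1 - s)))) (at s)"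
proof -
  have "((\<lambda>s. 1 / (1 - s)) has_real_derivative 1 / (1 - s)\<^sup>2) (at s)"
    using \<open>s < 1\<close> by (auto intro!: derivative_eq_intros simp: power2_eq_square)
  from DERIV_chain2[OF assms(2) this]
  have "((\<lambda>s. (1 - s) powr \<beta> * G (1 / (1 - s))) has_real_derivative
      (1 - s) powr \<beta> * (G' (1 / (1 - s)) * (1 / (1 - s)\<^sup>2)) - \<beta> * (1 - s) powr (\<beta> - 1) * G (1 / (1 - s))) (at s)"
    using \<open>s < 1\<close> by (auto intro!: derivative_eq_intros)
  moreover have "(1 - s) powr \<beta> = (1 - s) powr (\<beta> - 1) * (1 - s)"
    using \<open>s < 1\<close> by (simp add: powr_diff)
  moreover have "p * w * (b * (1 / w\<^sup>2)) - \<beta> * p * c = p * (1 / w * b - \<beta> * c)"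
    if "w \<noteq> 0" for p w b c :: real
    using that by (simp add: field_simps power2_eq_square)
  ultimately show ?thesis using \<open>s < 1\<close> by simp
qed

lemma classG_weighted_decay:
  assumes "g \<in> classG" "\<beta> > 0" "\<epsilon> > 0"
  obtains F F' C
  where "\<And>s. 0 \<le> s \<Longrightarrow> s < 1 \<Longrightarrow> F s = (1 - s) powr \<beta> * g s" and "F 1 = 0"
    and "\<And>s. 0 \<le> s \<Longrightarrow> s < 1 \<Longrightarrow> (F has_real_derivative F' s) (at s)"
    and "\<And>s. 0 \<le> s \<Longrightarrow> s < 1 \<Longrightarrow> \<bar>F s\<bar> \<le> C * (1 - s) powr (\<beta> - \<epsilon>)"
    and "\<And>s. 0 \<le> s \<Longrightarrow> s < 1 \<Longrightarrow> \<bar>F' s\<bar> \<le> C * (1 - s) powr (\<beta> - 1 - \<epsilon>)"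
proof -
  obtain G C where "C \<ge> 0"
    and G': "\<And>x. x > 0 \<Longrightarrow> (G has_real_derivative deriv G x) (at x)"
    and G_bound: "\<And>x. x \<ge> 1 \<Longrightarrow> \<bar>G x\<bar> \<le> C * x powr \<epsilon>"
    and G'_bound: "\<And>x. x \<ge> 1 \<Longrightarrow> \<bar>x * deriv G x\<bar> \<le> C * x powr \<epsilon>"
    and g: "\<And>x. 0 \<le> x \<Longrightarrow> x < 1 \<Longrightarrow> g x = G (1 / (1 - x))"
    using classG_bounds[OF assms(1,3)] by blast
  define F where "F s = (if s < 1 then (1 - s) powr \<beta> * G (1 / (1 - s)) else 0)" for s
  define F' where "F' s = (1 - s) powr (\<beta> - 1) *
      (1 / (1 - s) * deriv G (1 / (1 - s)) - \<beta> * G (1 / (1 - s)))" for s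
  have weight: "(1 - s) powr e * (c * (1 / (1 - s)) powr \<epsilon>) = c * (1 - s) powr (e - \<epsilon>)"
    if "s < 1" for s e c
    using that by (simp add: powr_divide powr_diff)
  have "(F has_real_derivative F' s) (at s)" if "s < 1" for s
  proof (rule has_field_derivative_transform_within_open[where S = "{..<1}"])
    show "((\<lambda>s. (1 - s) powr \<beta> * G (1 / (1 - s))) has_real_derivative F' s) (at s)"
      unfolding F'_def using that by (intro has_real_derivative_weighted_composition G') auto
  qed (use that in \<open>auto simp: F_def\<close>)
  moreover have "\<bar>F s\<bar> \<le> ((1 + \<beta>) * C) * (1 - s) powr (\<beta> - \<epsilon>)"
    and "\<bar>F' s\<bar> \<le> ((1 + \<beta>) * C) * (1 - s) powr (\<beta> - 1 - \<epsilon>)" if "0 \<le> s" "s < 1" for s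
  proof -
    define x where "x = 1 / (1 - s)"
    have "x \<ge> 1" using that by (simp add: x_def)
    have "\<bar>F s\<bar> = (1 - s) powr \<beta> * \<bar>G x\<bar>"
      using that by (simp add: F_def x_def abs_mult)
    also have "\<dots> \<le> (1 - s) powr \<beta> * (C * x powr \<epsilon>)"
      using G_bound[OF \<open>x \<ge> 1\<close>] by (intro mult_left_mono) auto
    also have "\<dots> \<le> (1 - s) powr \<beta> * ((1 + \<beta>) * C * x powr \<epsilon>)"
      using \<open>C \<ge> 0\<close> \<open>\<beta> > 0\<close> by (intro mult_left_mono mult_right_mono) (auto simp: algebra_simps)
    finally show "\<bar>F s\<bar> \<le> ((1 + \<beta>) * C) * (1 - s) powr (\<beta> - \<epsilon>)"
      using weight[OF \<open>s < 1\<close>] by (simp add: x_def)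
    have "\<bar>x * deriv G x - \<beta> * G x\<bar> \<le> \<bar>x * deriv G x\<bar> + \<beta> * \<bar>G x\<bar>"
      using abs_triangle_ineq4[of "x * deriv G x" "\<beta> * G x"] \<open>\<beta> > 0\<close> by (simp add: abs_mult)
    also have "\<dots> \<le> C * x powr \<epsilon> + \<beta> * (C * x powr \<epsilon>)"
      using G_bound[OF \<open>x \<ge> 1\<close>] G'_bound[OF \<open>x \<ge> 1\<close>] \<open>\<beta> > 0\<close>
      by (intro add_mono mult_left_mono) auto
    also have "\<dots> = (1 + \<beta>) * C * x powr \<epsilon>"
      by (simp add: algebra_simps)
    finally have "\<bar>F' s\<bar> \<le> (1 - s) powr (\<beta> - 1) * ((1 + \<beta>) * C * x powr \<epsilon>)"
      by (auto simp: F'_def x_def abs_mult intro!: mult_left_mono)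
    then show "\<bar>F' s\<bar> \<le> ((1 + \<beta>) * C) * (1 - s) powr (\<beta> - 1 - \<epsilon>)"
      using weight[OF \<open>s < 1\<close>] by (simp add: x_def)
  qed
  moreover have "F s = (1 - s) powr \<beta> * g s" if "0 \<le> s" "s < 1" for s
    using that g by (simp add: F_def)
  ultimately show ?thesis by (intro that[of F F' "(1 + \<beta>) * C"]) (auto simp: F_def)
qed

theorem mainTheorem14:
  fixes \<beta> :: real and g F :: "real \<Rightarrow> real"
  assumes "\<beta> > 0"
    and "g \<in> classG"
    and "\<forall>x\<in>{0..<1}. F x = (1 - x) powr \<beta> * g x"
  shows "((\<lambda>t. t * integral {0..1} (\<lambda>s. F s * (F s - F ((1 - 1 / t) * s))))
           \<longlongrightarrow> - (1/2) * integral {0..1} (\<lambda>s. (F s)\<^sup>2)) at_top"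
proof -
  \<comment> \<open>\<open>\<epsilon> = \<beta>/4\<close> gives exponents \<open>a = 3\<beta>/4 > 0\<close> and \<open>a + b = 3\<beta>/2 - 1 > -1\<close>.\<close>
  obtain F0 F0' C where F0: "\<And>s. 0 \<le> s \<Longrightarrow> s < 1 \<Longrightarrow> F0 s = (1 - s) powr \<beta> * g s" "F0 1 = 0"
    and der: "\<And>s. 0 \<le> s \<Longrightarrow> s < 1 \<Longrightarrow> (F0 has_real_derivative F0' s) (at s)"
    and bounds: "\<And>s. 0 \<le> s \<Longrightarrow> s < 1 \<Longrightarrow> \<bar>F0 s\<bar> \<le> C * (1 - s) powr (\<beta> - \<beta>/4)"
      "\<And>s. 0 \<le> s \<Longrightarrow> s < 1 \<Longrightarrow> \<bar>F0' s\<bar> \<le> C * (1 - s) powr (\<beta> - 1 - \<beta>/4)"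
    using classG_weighted_decay[OF assms(2,1), of "\<beta>/4"] \<open>\<beta> > 0\<close> by auto
  have F_eq: "F s = F0 s" if "0 \<le> s" "s < 1" for s
    using that assms(3) F0(1) by simp
  have "integral {0..1} (\<lambda>s. (F s)\<^sup>2) = integral {0..1} (\<lambda>s. (F0 s)\<^sup>2)"
    by (rule integral_spike[of "{1}"]) (auto simp: F_eq)
  moreover have "eventually (\<lambda>t. t * integral {0..1} (\<lambda>s. F0 s * (F0 s - F0 ((1 - 1/t) * s)))
      = t * integral {0..1} (\<lambda>s. F s * (F s - F ((1 - 1 / t) * s)))) at_top"
    using eventually_ge_at_top[of 1]
  proof eventually_elim
    case (elim t)
    show ?case using integral_scaled_difference_cong[of F F0, OF F_eq elim] by simp
  qed
  moreover have "((\<lambda>t. t * integral {0..1} (\<lambda>s. F0 s * (F0 s - F0 ((1 - 1/t) * s))))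
      \<longlongrightarrow> - (1/2) * integral {0..1} (\<lambda>s. (F0 s)\<^sup>2)) at_top"
    using \<open>\<beta> > 0\<close> by (intro tendsto_scaled_difference_integral[OF der bounds F0(2)]) auto
  ultimately show ?thesis
    by (simp add: Lim_transform_eventually)
qed

end
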